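(* Consider the network model and the LC-NSB algorithm described in the context, with no packet arrivals after time 0. Consider any frame $k'$, consisting of time-slots $p=3k'$, $p+1$, $p+2$. If $\Delta(p)\ge 2$, then under LC-NSB the maximum node queue length at the end of the frame (i.e., after the transmissions of slot $p+2$) is at most $\Delta(p)-2$.
   Context: Network model. $G=(V,E)$ is a finite undirected graph with $n=|V|$ nodes; $L(i)$ denotes the set of links incident to node $i$. Time is slotted, $k=0,1,2,\dots$. $Q_l(k)$ is the number of packets at link $l$ in slot $k$, $Q_i(k)=\sum_{l\in L(i)}Q_l(k)$ is the node queue length, and $\Delta(k)=\max_iQ_i(k)$. A schedule is a matching of $G$ (links pairwise sharing no endpoint); only links with $Q_l(k)>0$ may be scheduled; each scheduled link transmits one packet, which leaves the system. LC-NSB algorithm. Frame $k'$ consists of slots $3k',3k'+1,3k'+2$. $R_i(k)=1$ if node $i$ is an endpoint of a link scheduled in slot $k$, else $0$ ($R_i(k)=0$ for $k<0$). $U_i(k)=R_i(k-1)R_i(k-2)$ if $k=3k'+2$ for some integer $k'$, $U_i(k)=R_i(k-1)$ otherwise. Node $i$ is critical in slot $k$ if $Q_i(k)=\Delta(k)$ and heavy if $Q_i(k)\ge\frac{n-1}{n}\Delta(k)$. In slot $k$, LC-NSB sets $w_i(k)=5-2U_i(k)$ if $i$ is critical, $w_i(k)=4-2U_i(k)$ if $i$ is heavy but not critical, and $w_i(k)=1$ otherwise; it excludes links with $Q_l(k)=0$ and schedules a matching $M$ of the remaining links maximizing $\sum_{i:\,M\cap L(i)\ne\emptyset}w_i(k)$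 (ties broken arbitrarily). *)

theory Defs
  imports Complex_Main
begin

definition graph :: "'v set \<Rightarrow> 'v set set \<Rightarrow> bool" where
  "graph V E \<longleftrightarrow> finite V \<and> (\<forall>e\<in>E. \<exists>u v. e = {u, v} \<and> u \<noteq> v \<and> u \<in> V \<and> v \<in> V)"

definition links_at :: "'v set set \<Rightarrow> 'v \<Rightarrow> 'v set set" where
  "links_at E i = {l \<in> E. i \<in> l}"

definition node_queue :: "'v set set \<Rightarrow> ('v set \<Rightarrow> nat) \<Rightarrow> 'v \<Rightarrow> nat" where
  "node_queue E q i = (\<Sum>l\<in>links_at E i. q l)"

text \<open>Delta = max_i Q_i (0 inserted only to make Max total; nat values are nonnegative).\<close>
definition max_queue :: "'v set \<Rightarrow> 'v set set \<Rightarrow> ('v set \<Rightarrow> nat) \<Rightarrow> nat" where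
  "max_queue V E q = Max (insert 0 (node_queue E q ` V))"

definition matching :: "'v set set \<Rightarrow> 'v set set \<Rightarrow> bool" where
  "matching E M \<longleftrightarrow> M \<subseteq> E \<and> (\<forall>l1\<in>M. \<forall>l2\<in>M. l1 \<noteq> l2 \<longrightarrow> l1 \<inter> l2 = {})"

definition covered :: "'v set set \<Rightarrow> 'v \<Rightarrow> bool" where
  "covered M i \<longleftrightarrow> (\<exists>l\<in>M. i \<in> l)"

text \<open>R_i(k) for integer k, with R_i(k) = 0 for k < 0; sched k is the matching of slot k.\<close>
definition Rind :: "(nat \<Rightarrow> 'v set set) \<Rightarrow> int \<Rightarrow> 'v \<Rightarrow> int" where
  "Rind sched k i = (if k < 0 then 0 else if covered (sched (nat k)) i then 1 else 0)"

definition Uind :: "(nat \<Rightarrow> 'v set set) \<Rightarrow> nat \<Rightarrow> 'v \<Rightarrow> int" where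
  "Uind sched k i =
     (if k mod 3 = 2 then Rind sched (int k - 1) i * Rind sched (int k - 2) i
      else Rind sched (int k - 1) i)"

definition lcnsb_weight ::
  "'v set \<Rightarrow> 'v set set \<Rightarrow> (nat \<Rightarrow> 'v set \<Rightarrow> nat) \<Rightarrow> (nat \<Rightarrow> 'v set set) \<Rightarrow> nat \<Rightarrow> 'v \<Rightarrow> int" where
  "lcnsb_weight V E Q sched k i =
     (let D = max_queue V E (Q k); qi = node_queue E (Q k) i in
      if qi = D then 5 - 2 * Uind sched k i
      else if real (card V) * real qi \<ge> (real (card V) - 1) * real D then 4 - 2 * Uind sched k i
      else 1)"

definition objective :: "'v set \<Rightarrow> ('v \<Rightarrow> int) \<Rightarrow> 'v set set \<Rightarrow> int" where
  "objective V w M = (\<Sum>i\<in>{i\<in>V. covered M i}. w i)"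

text \<open>A run of LC-NSB (no arrivals after time 0): Q k l is the queue of link l in slot k,
  sched k the matching scheduled in slot k; any tie-breaking is allowed.\<close>
definition lcnsb_run ::
  "'v set \<Rightarrow> 'v set set \<Rightarrow> (nat \<Rightarrow> 'v set \<Rightarrow> nat) \<Rightarrow> (nat \<Rightarrow> 'v set set) \<Rightarrow> bool" where
  "lcnsb_run V E Q sched \<longleftrightarrow>
     (\<forall>k. matching E (sched k) \<and> (\<forall>l\<in>sched k. Q k l > 0)
        \<and> (\<forall>M. matching E M \<and> (\<forall>l\<in>M. Q k l > 0) \<longrightarrow>
              objective V (lcnsb_weight V E Q sched k) M \<le> objective V (lcnsb_weight V E Q sched k) (sched k))
        \<and> (\<forall>l. Q (Suc k) l = (if l \<in> sched k then Q k l - 1 else Q k l)))"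

end

theory Submission
  imports Defs
begin

text \<open>
  In every slot LC-NSB schedules a maximum-weight matching of the active links, and a vertex
  has the top weight 5 exactly when it is critical and was idle earlier in the frame. The core
  fact is that a maximum-weight matching covers every vertex of top weight W as long as all top
  vertices carry the maximal load D > 0 and the active links between top vertices form a
  bipartite graph. Suppose a top vertex v is exposed, and let U be the set of vertices that can
  become the exposed one by repeatedly trading a matched link {b, a} for a link {u, b} at the
  currently exposed vertex u. Optimality forces each trade to preserve the weight, so U consists
  of top vertices. A link inside U would close an alternating path between two such matchings
  into an odd cycle of top vertices, so U is independent; moreover every neighbour of U is
  matched into U - {v}. Counting the loads link by link gives |U| D \<le> |N(U)| D < |U| D.

  In slot p + 1 of a frame the critical vertices that were idle in slot p form an independent
  set, by maximality of the matching of slot p; in slot p + 2 the critical vertices not served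
  in both earlier slots are properly two-coloured by whether they were served in slot p + 1.
  Hence no vertex keeps load \<Delta>(p) for two slots, and every vertex still at \<Delta>(p) - 1
  is served in slot p + 2.
\<close>

lemma graph_edgeE:
  assumes "graph V E" "l \<in> E"
  obtains x y where "l = {x, y}" "x \<noteq> y" "x \<in> V" "y \<in> V"
  using assms unfolding graph_def by blast

lemma graph_edgeD:
  assumes "graph V E" "{x, y} \<in> E"
  shows "x \<noteq> y" "x \<in> V" "y \<in> V"
  using graph_edgeE[OF assms] by (metis doubleton_eq_iff)+

lemma graph_edge_subset: "graph V E \<Longrightarrow> l \<in> E \<Longrightarrow> l \<subseteq> V"
  by (erule graph_edgeE) auto

lemma graph_finite: "graph V E \<Longrightarrow> finite V"
  unfolding graph_def by blast

lemma graph_finite_links: "graph V E \<Longrightarrow> finite E"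
  by (meson Pow_iff finite_Pow_iff finite_subset graph_edge_subset graph_finite subsetI)

lemma matching_edge_unique:
  "matching E M \<Longrightarrow> l \<in> M \<Longrightarrow> l' \<in> M \<Longrightarrow> x \<in> l \<Longrightarrow> x \<in> l' \<Longrightarrow> l = l'"
  unfolding matching_def by blast

lemma matching_partner_unique: "matching E M \<Longrightarrow> {b, a} \<in> M \<Longrightarrow> {b, a'} \<in> M \<Longrightarrow> a = a'"
  using matching_edge_unique[of E M "{b, a}" "{b, a'}" b] by (auto simp: doubleton_eq_iff)

lemma matching_links: "matching E M \<Longrightarrow> M \<subseteq> E"
  unfolding matching_def by blast

lemma matching_subset: "matching E M \<Longrightarrow> M' \<subseteq> M \<Longrightarrow> matching E M'"
  unfolding matching_def by blast

lemma matching_insert: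
  assumes "matching E M" "l \<in> E" "\<forall>x\<in>l. \<not> covered M x"
  shows "matching E (insert l M)"
  using assms unfolding matching_def covered_def by blast

lemma covered_insert [simp]: "covered (insert l M) x \<longleftrightarrow> x \<in> l \<or> covered M x"
  unfolding covered_def by blast

lemma covered_Diff_edge:
  "matching E M \<Longrightarrow> l \<in> M \<Longrightarrow> covered (M - {l}) x \<longleftrightarrow> covered M x \<and> x \<notin> l"
  unfolding covered_def using matching_edge_unique[of E M _ l x] by blast

lemma covered_partner:
  assumes "graph V E" "matching E M" "covered M b"
  obtains a where "{b, a} \<in> M"
proof -
  obtain l where "l \<in> M" "b \<in> l" using assms(3) unfolding covered_def by blast
  moreover obtain x y where "l = {x, y}"
    using graph_edgeE[OF assms(1)] matching_links[OF assms(2)] \<open>l \<in> M\<close> by blast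
  ultimately show thesis using that by (auto simp: insert_commute)
qed

lemma matching_flip:
  assumes "graph V E" "matching E M" "\<not> covered M u" "{u, b} \<in> E" "{b, a} \<in> M"
  shows "matching E (insert {u, b} (M - {{b, a}}))"
    and "covered (insert {u, b} (M - {{b, a}})) x \<longleftrightarrow> x = u \<or> (covered M x \<and> x \<noteq> a)"
proof -
  have "b \<noteq> a" using graph_edgeD(1)[OF assms(1)] matching_links[OF assms(2)] assms(5) by blast
  have cov: "covered (M - {{b, a}}) x \<longleftrightarrow> covered M x \<and> x \<notin> {b, a}" for x
    using covered_Diff_edge[OF assms(2,5)] .
  show "matching E (insert {u, b} (M - {{b, a}}))"
  proof (rule matching_insert)
    show "matching E (M - {{b, a}})" using matching_subset[OF assms(2)] by blast
    show "\<forall>x\<in>{u, b}. \<not> covered (M - {{b, a}}) x" using assms(3) cov by blast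
  qed (rule assms(4))
  have "covered M b" using assms(5) unfolding covered_def by blast
  then show "covered (insert {u, b} (M - {{b, a}})) x \<longleftrightarrow> x = u \<or> (covered M x \<and> x \<noteq> a)"
    using cov \<open>b \<noteq> a\<close> by auto
qed

lemma objective_insert:
  assumes "finite V" "l \<subseteq> V" "\<forall>x\<in>l. \<not> covered M x"
  shows "objective V w (insert l M) = objective V w M + sum w l"
proof -
  have "{i \<in> V. covered (insert l M) i} = {i \<in> V. covered M i} \<union> l"
    using assms(2) by auto
  moreover have "finite l" using assms(1,2) finite_subset by blast
  moreover have "{i \<in> V. covered M i} \<inter> l = {}" using assms(3) by blast
  ultimately show ?thesis
    unfolding objective_def using assms(1) by (simp add: sum.union_disjoint)
qed

lemma objective_flip:
  assumes "graph V E" "matching E M" "\<not> covered M u" "{u, b} \<in> E" "{b, a} \<in> M"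
  shows "objective V w (insert {u, b} (M - {{b, a}})) = objective V w M + w u - w a"
proof -
  let ?M = "M - {{b, a}}"
  have ba: "{b, a} \<in> E" using matching_links[OF assms(2)] assms(5) by blast
  have free: "\<forall>x\<in>{b, a}. \<not> covered ?M x" "\<forall>x\<in>{u, b}. \<not> covered ?M x"
    using covered_Diff_edge[OF assms(2,5)] assms(3) by (auto simp: covered_def)
  have "objective V w M = objective V w ?M + sum w {b, a}"
    using objective_insert[OF graph_finite[OF assms(1)] graph_edge_subset[OF assms(1) ba] free(1)]
      assms(5) by (simp add: insert_absorb)
  moreover have "objective V w (insert {u, b} ?M) = objective V w ?M + sum w {u, b}"
    using objective_insert[OF graph_finite[OF assms(1)] graph_edge_subset[OF assms(1,4)] free(2)] .
  ultimately show ?thesis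
    using graph_edgeD(1)[OF assms(1) ba] graph_edgeD(1)[OF assms(1,4)] by simp
qed

definition max_weight_matching :: "'v set \<Rightarrow> 'v set set \<Rightarrow> ('v \<Rightarrow> int) \<Rightarrow> 'v set set \<Rightarrow> bool" where
  "max_weight_matching V E w M \<longleftrightarrow>
     matching E M \<and> (\<forall>M'. matching E M' \<longrightarrow> objective V w M' \<le> objective V w M)"

lemma max_weight_matching_no_free_link:
  assumes "graph V E" "max_weight_matching V E w M" "\<And>i. i \<in> V \<Longrightarrow> 0 < w i"
    and "{x, y} \<in> E" "\<not> covered M x" "\<not> covered M y"
  shows False
proof -
  have M: "matching E M" using assms(2) unfolding max_weight_matching_def by blast
  have "objective V w (insert {x, y} M) = objective V w M + (w x + w y)"
    using objective_insert[OF graph_finite[OF assms(1)] graph_edge_subset[OF assms(1,4)]]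
      assms(5,6) graph_edgeD[OF assms(1,4)] by simp
  moreover have "objective V w (insert {x, y} M) \<le> objective V w M"
    using assms(2,4-6) M matching_insert unfolding max_weight_matching_def by blast
  moreover have "0 < w x" "0 < w y" using assms(3) graph_edgeD[OF assms(1,4)] by auto
  ultimately show False by linarith
qed

section \<open>Alternating paths\<close>

lemma bool_alternation_even:
  fixes f :: "nat \<Rightarrow> bool"
  assumes "\<And>j. j < n \<Longrightarrow> f (Suc j) \<longleftrightarrow> \<not> f j"
  shows "f n \<longleftrightarrow> (if even n then f 0 else \<not> f 0)"
  using assms by (induction n) auto

definition alternating_path :: "'v set set \<Rightarrow> 'v set set \<Rightarrow> (nat \<Rightarrow> 'v) \<Rightarrow> nat \<Rightarrow> bool" where
  "alternating_path B A c n \<longleftrightarrow>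
     inj_on c {..n} \<and> (\<forall>j<n. {c j, c (Suc j)} \<in> (if even j then B - A else A - B))"

lemma alternating_path_trivial: "alternating_path B A c 0"
  unfolding alternating_path_def by simp

lemma alternating_path_vertex_on_edge:
  assumes "alternating_path B A c n" "0 < j" "j \<le> n"
  shows "\<exists>l\<in>(A - B) \<union> (B - A). c j \<in> l"
proof -
  obtain i where "j = Suc i" "i < n" using assms(2,3) by (cases j) auto
  then have "{c i, c j} \<in> (A - B) \<union> (B - A)"
    using assms(1) unfolding alternating_path_def by (auto split: if_splits)
  then show ?thesis by blast
qed

lemma alternating_path_prepend:
  assumes path: "alternating_path B A' c n"
    and az: "{a, z} \<in> B - A" and zc: "{z, c 0} \<in> A - B" and "a \<noteq> z"
    and avoid: "\<And>j. j \<le> n \<Longrightarrow> c j \<noteq> a \<and> c j \<noteq> z"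
    and sub: "B - A' \<subseteq> B - A" "A' - B \<subseteq> A - B"
  shows "alternating_path B A (\<lambda>j. if j = 0 then a else if j = 1 then z else c (j - 2)) (n + 2)"
proof -
  let ?c = "\<lambda>j. if j = 0 then a else if j = 1 then z else c (j - 2)"
  have inj: "inj_on c {..n}"
    and edge: "\<And>j. j < n \<Longrightarrow> {c j, c (Suc j)} \<in> (if even j then B - A' else A' - B)"
    using path unfolding alternating_path_def by auto
  have "inj_on ?c {..n + 2}"
  proof (rule inj_onI)
    fix i j assume "i \<in> {..n + 2}" "j \<in> {..n + 2}" "?c i = ?c j"
    moreover from this have "i - 2 \<le> n" "j - 2 \<le> n" by auto
    ultimately show "i = j"
      using inj_onD[OF inj, of "i - 2" "j - 2"] avoid[of "i - 2"] avoid[of "j - 2"] \<open>a \<noteq> z\<close>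
      by (auto split: if_splits)
  qed
  moreover have "{?c j, ?c (Suc j)} \<in> (if even j then B - A else A - B)" if "j < n + 2" for j
  proof -
    have "j = 0 \<or> j = 1 \<or> (\<exists>i. j = i + 2 \<and> i < n)" using that by presburger
    then consider "j = 0" | "j = 1" | i where "j = i + 2" "i < n" by blast
    then show ?thesis
    proof cases
      case 3
      then show ?thesis using edge[of i] sub by (auto split: if_splits)
    qed (use az zc in auto)
  qed
  ultimately show ?thesis unfolding alternating_path_def by blast
qed

lemma matching_common_edge_vertex:
  assumes "matching E A" "matching E B" "l \<in> A" "l \<in> B" "x \<in> l" "l' \<in> (A - B) \<union> (B - A)"
  shows "x \<notin> l'"
  using assms matching_edge_unique[of E A l l' x] matching_edge_unique[of E B l l' x] by blast

lemma alternating_path_exchange: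
  assumes A': "matching E (insert {a, z} (A - {{z, y}}))" and B: "matching E B"
    and az: "{a, z} \<in> B" "{a, z} \<notin> A" and zy: "{z, y} \<in> A" "{z, y} \<notin> B"
    and "a \<noteq> z" "y \<noteq> a" "y \<noteq> z"
    and path: "alternating_path B (insert {a, z} (A - {{z, y}})) c n" "c 0 = y"
  shows "alternating_path B A (\<lambda>j. if j = 0 then a else if j = 1 then z else c (j - 2)) (n + 2)"
proof (rule alternating_path_prepend[OF path(1)])
  let ?A' = "insert {a, z} (A - {{z, y}})"
  show "B - ?A' \<subseteq> B - A" "?A' - B \<subseteq> A - B" using az zy by auto
  show "{a, z} \<in> B - A" "{z, c 0} \<in> A - B" using az zy path(2) by auto
  show "a \<noteq> z" by fact
  show "c j \<noteq> a \<and> c j \<noteq> z" if j: "j \<le> n" for j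
  proof (cases "j = 0")
    case True
    then show ?thesis using path(2) \<open>y \<noteq> a\<close> \<open>y \<noteq> z\<close> by simp
  next
    case False
    then obtain l where l: "l \<in> (?A' - B) \<union> (B - ?A')" "c j \<in> l"
      using alternating_path_vertex_on_edge[OF path(1) _ j] by blast
    have "a \<notin> l" "z \<notin> l"
      using matching_common_edge_vertex[OF A' B insertI1 az(1) _ l(1)] by simp_all
    then show ?thesis using l(2) by blast
  qed
qed

lemma alternating_path_exists:
  assumes "graph V E" "matching E A" "matching E B"
    and "\<not> covered A a" "covered B a" "\<not> covered B b" "a \<noteq> b"
    and "\<And>x. x \<noteq> a \<Longrightarrow> x \<noteq> b \<Longrightarrow> covered A x \<longleftrightarrow> covered B x"
  shows "\<exists>n c. even n \<and> c 0 = a \<and> c n = b \<and> alternating_path B A c n"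
  using assms(2,4-8)
proof (induction "card ((A - B) \<union> (B - A))" arbitrary: A a rule: less_induct)
  case less
  note graph = assms(1) and B = assms(3)
  obtain z where az: "{a, z} \<in> B" using covered_partner[OF graph B less.prems(3)] .
  have azE: "{a, z} \<in> E" using matching_links[OF B] az by blast
  have "a \<noteq> z" using graph_edgeD(1)[OF graph azE] .
  have "z \<noteq> b" using az less.prems(4) unfolding covered_def by blast
  then have "covered A z"
    using less.prems(6)[of z] az \<open>a \<noteq> z\<close> unfolding covered_def by blast
  then obtain y where zy: "{z, y} \<in> A" using covered_partner[OF graph less.prems(1)] by blast
  have "{a, z} \<notin> A" "y \<noteq> a" using zy less.prems(2) unfolding covered_def by blast+
  have "{z, y} \<notin> B"
    using matching_partner_unique[OF B _ az[unfolded insert_commute[of a]]] \<open>y \<noteq> a\<close> by blast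
  have "y \<noteq> z" using graph_edgeD(1)[OF graph] matching_links[OF less.prems(1)] zy by blast
  define A' where "A' = insert {a, z} (A - {{z, y}})"
  have A': "matching E A'" and covA': "\<And>x. covered A' x \<longleftrightarrow> x = a \<or> (covered A x \<and> x \<noteq> y)"
    unfolding A'_def using matching_flip[OF graph less.prems(1,2) azE zy] by auto
  obtain n c where path: "even n" "c 0 = y" "c n = b" "alternating_path B A' c n"
  proof (cases "y = b")
    case True
    then show thesis using that[of 0 "\<lambda>_. b"] by (simp add: alternating_path_trivial)
  next
    case False
    have "(A' - B) \<union> (B - A') = (A - B) \<union> (B - A) - {{a, z}, {z, y}}"
      unfolding A'_def using az zy \<open>{a, z} \<notin> A\<close> \<open>{z, y} \<notin> B\<close> by auto
    moreover have "{a, z} \<in> (A - B) \<union> (B - A)" using az \<open>{a, z} \<notin> A\<close> by blast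
    ultimately have "(A' - B) \<union> (B - A') \<subset> (A - B) \<union> (B - A)" by blast
    moreover have "finite ((A - B) \<union> (B - A))"
      using graph_finite_links[OF graph] matching_links[OF less.prems(1)] matching_links[OF B]
      by (meson Diff_subset finite_Un finite_subset)
    ultimately have lt: "card ((A' - B) \<union> (B - A')) < card ((A - B) \<union> (B - A))"
      by (simp add: psubset_card_mono)
    have "covered A y" using zy unfolding covered_def by blast
    then have "covered B y" using less.prems(6)[of y] \<open>y \<noteq> a\<close> False by blast
    moreover have "\<not> covered A' y" using covA' \<open>y \<noteq> a\<close> by blast
    moreover have "covered A' x \<longleftrightarrow> covered B x" if "x \<noteq> y" "x \<noteq> b" for x
      using covA' less.prems(3) less.prems(6)[of x] that by (cases "x = a") auto
    ultimately show thesis using less.hyps[OF lt A' _ _ less.prems(4) False] that by blast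
  qed
  have "alternating_path B A (\<lambda>j. if j = 0 then a else if j = 1 then z else c (j - 2)) (n + 2)"
    using alternating_path_exchange[OF A'[unfolded A'_def] B az \<open>{a, z} \<notin> A\<close> zy \<open>{z, y} \<notin> B\<close>
        \<open>a \<noteq> z\<close> \<open>y \<noteq> a\<close> \<open>y \<noteq> z\<close> path(4)[unfolded A'_def] path(2)] .
  moreover have "even (n + 2)" using path(1) by simp
  ultimately show ?case
    using path(3) by (intro exI[of _ "n + 2"] exI[of _ "\<lambda>j. if j = 0 then a else if j = 1 then z else c (j - 2)"]) auto
qed

lemma sum_node_queue:
  assumes "finite E" "finite S"
  shows "(\<Sum>x\<in>S. node_queue E q x) = (\<Sum>l\<in>E. q l * card (l \<inter> S))"
proof -
  have "(\<Sum>x\<in>S. node_queue E q x) = (\<Sum>x\<in>S. \<Sum>l\<in>E. if x \<in> l then q l else 0)"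
    unfolding node_queue_def links_at_def using assms(1) by (simp add: sum.inter_filter)
  also have "\<dots> = (\<Sum>l\<in>E. \<Sum>x\<in>S. if x \<in> l then q l else 0)" by (rule sum.swap)
  also have "\<dots> = (\<Sum>l\<in>E. q l * card (l \<inter> S))"
    using assms(2) by (simp add: sum.If_cases Int_commute mult.commute)
  finally show ?thesis .
qed

lemma sum_node_queue_le_neighbours:
  assumes "graph V E" "U \<subseteq> V" and indep: "\<And>x y. x \<in> U \<Longrightarrow> y \<in> U \<Longrightarrow> {x, y} \<notin> E"
  shows "(\<Sum>x\<in>U. node_queue E q x) \<le> (\<Sum>x\<in>{y. \<exists>x\<in>U. {x, y} \<in> E}. node_queue E q x)"
proof -
  let ?N = "{y. \<exists>x\<in>U. {x, y} \<in> E}"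
  have fin: "finite V" "finite E" using graph_finite graph_finite_links assms(1) by blast+
  have "?N \<subseteq> V" using graph_edgeD(3)[OF assms(1)] by blast
  then have finN: "finite ?N" using fin(1) finite_subset by blast
  have "card (l \<inter> U) \<le> card (l \<inter> ?N)" if lE: "l \<in> E" for l
  proof -
    obtain x y where l: "l = {x, y}" "x \<noteq> y" using graph_edgeE[OF assms(1) lE] by blast
    have "\<not> (x \<in> U \<and> y \<in> U)" using indep[of x y] lE l(1) by blast
    then have "l \<inter> U = {} \<or> (card (l \<inter> U) = 1 \<and> l \<inter> ?N \<noteq> {})"
      using lE l by (auto simp: insert_commute)
    moreover have "finite (l \<inter> ?N)" using finN by blast
    ultimately have "l \<inter> U = {} \<or> (card (l \<inter> U) = 1 \<and> 0 < card (l \<inter> ?N))"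
      using card_gt_0_iff by blast
    then show ?thesis by auto
  qed
  then have "(\<Sum>l\<in>E. q l * card (l \<inter> U)) \<le> (\<Sum>l\<in>E. q l * card (l \<inter> ?N))"
    by (intro sum_mono mult_left_mono) auto
  then show ?thesis
    using sum_node_queue[OF fin(2)] finite_subset[OF assms(2) fin(1)] finN by simp
qed

definition active_links :: "'v set set \<Rightarrow> ('v set \<Rightarrow> nat) \<Rightarrow> 'v set set" where
  "active_links E q = {l \<in> E. 0 < q l}"

lemma graph_active_links: "graph V E \<Longrightarrow> graph V (active_links E q)"
  unfolding graph_def active_links_def by blast

lemma matching_active_links_iff: "matching (active_links E q) M \<longleftrightarrow> matching E M \<and> (\<forall>l\<in>M. 0 < q l)"
  unfolding matching_def active_links_def by blast

lemma node_queue_active_links: "finite E \<Longrightarrow> node_queue (active_links E q) q = node_queue E q"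
  unfolding node_queue_def links_at_def active_links_def
  by (intro ext sum.mono_neutral_left) auto

lemma node_queue_le_max_queue: "finite V \<Longrightarrow> i \<in> V \<Longrightarrow> node_queue E q i \<le> max_queue V E q"
  unfolding max_queue_def by simp

lemma max_queue_le: "finite V \<Longrightarrow> (\<And>i. i \<in> V \<Longrightarrow> node_queue E q i \<le> m) \<Longrightarrow> max_queue V E q \<le> m"
  unfolding max_queue_def by simp

lemma card_links_at_Int_matching:
  assumes "matching E M"
  shows "card (links_at E i \<inter> M) = (if covered M i then 1 else 0)"
proof (cases "covered M i")
  case True
  then obtain l where "l \<in> M" "i \<in> l" unfolding covered_def by blast
  then have "links_at E i \<inter> M = {l}"
    using assms matching_edge_unique[OF assms] unfolding links_at_def matching_def by blast
  then show ?thesis using True by simp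
next
  case False
  then have "links_at E i \<inter> M = {}" unfolding links_at_def covered_def by blast
  then show ?thesis using False by simp
qed

section \<open>Maximum-weight matchings cover the vertices of top weight\<close>

locale top_weight_matching =
  fixes V :: "'v set" and E :: "'v set set" and q :: "'v set \<Rightarrow> nat" and w :: "'v \<Rightarrow> int"
    and W :: int and D :: nat and col :: "'v \<Rightarrow> bool" and M0 :: "'v set set"
  assumes graph: "graph V E"
    and max_weight: "max_weight_matching V E w M0"
    and weight_pos: "\<And>i. i \<in> V \<Longrightarrow> 0 < w i"
    and weight_le: "\<And>i. i \<in> V \<Longrightarrow> w i \<le> W"
    and load_le: "\<And>i. i \<in> V \<Longrightarrow> node_queue E q i \<le> D"
    and top_load: "\<And>i. i \<in> V \<Longrightarrow> w i = W \<Longrightarrow> node_queue E q i = D"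
    and load_pos: "0 < D"
    and top_bipartite: "\<And>x y. {x, y} \<in> E \<Longrightarrow> w x = W \<Longrightarrow> w y = W \<Longrightarrow> col x \<noteq> col y"

lemma (in top_weight_matching) matching_M0: "matching E M0"
  using max_weight unfolding max_weight_matching_def by blast

locale top_weight_exposed = top_weight_matching +
  fixes v :: 'v
  assumes v_in: "v \<in> V" and v_top: "w v = W" and v_exposed: "\<not> covered M0 v"
begin

inductive flipped :: "'v set set \<Rightarrow> 'v \<Rightarrow> bool" where
  start: "flipped M0 v"
| flip: "flipped M u \<Longrightarrow> {u, b} \<in> E \<Longrightarrow> {b, a} \<in> M \<Longrightarrow> flipped (insert {u, b} (M - {{b, a}})) a"

definition exposable :: "'v set" where
  "exposable = {u. \<exists>M. flipped M u}"

lemma flipped_exposable: "flipped M u \<Longrightarrow> u \<in> exposable"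
  unfolding exposable_def by blast

lemma flipped_invariant:
  assumes "flipped M u"
  shows "max_weight_matching V E w M \<and> u \<in> V \<and> w u = W \<and> \<not> covered M u
    \<and> insert u (Collect (covered M)) = insert v (Collect (covered M0))"
  using assms
proof (induction rule: flipped.induct)
  case start
  then show ?case using max_weight v_in v_top v_exposed by blast
next
  case (flip M u b a)
  let ?M = "insert {u, b} (M - {{b, a}})"
  have M: "matching E M" using flip.IH unfolding max_weight_matching_def by blast
  have M': "matching E ?M" and cov: "\<And>x. covered ?M x \<longleftrightarrow> x = u \<or> (covered M x \<and> x \<noteq> a)"
    using matching_flip[OF graph M _ flip.hyps(2,3)] flip.IH by auto
  have obj: "objective V w ?M = objective V w M + w u - w a"
    using objective_flip[OF graph M _ flip.hyps(2,3)] flip.IH by blast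
  have "a \<in> V" using graph_edgeD(3)[OF graph] matching_links[OF M] flip.hyps(3) by blast
  moreover have "objective V w ?M \<le> objective V w M"
    using flip.IH M' unfolding max_weight_matching_def by blast
  ultimately have "w a = W" using obj weight_le flip.IH by fastforce
  then have "max_weight_matching V E w ?M"
    using flip.IH M' obj unfolding max_weight_matching_def by simp
  moreover have "covered M a" using flip.hyps(3) unfolding covered_def by blast
  ultimately show ?case
    using cov flip.IH \<open>a \<in> V\<close> \<open>w a = W\<close> by auto
qed

lemma flipped_matching: "flipped M u \<Longrightarrow> matching E M"
  using flipped_invariant unfolding max_weight_matching_def by blast

lemma flipped_untouched:
  assumes "flipped M u" "l \<inter> exposable = {}"
  shows "l \<in> M \<longleftrightarrow> l \<in> M0"
  using assms
proof (induction rule: flipped.induct)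
  case (flip M u b a)
  have "u \<in> exposable" "a \<in> exposable"
    using flipped_exposable flipped.flip[OF flip.hyps] flip.hyps(1) by blast+
  then show ?case using flip by blast
qed simp

lemma exposable_along_walk:
  assumes "flipped N (d 0)" "inj_on d {..m}"
    and edges: "\<And>j. j < m \<Longrightarrow> {d j, d (Suc j)} \<in> (if even j then E else N)"
  shows "2 * i \<le> m \<Longrightarrow> d (2 * i) \<in> exposable"
proof -
  have "2 * i \<le> m \<Longrightarrow> \<exists>N'. flipped N' (d (2 * i))
      \<and> (\<forall>j. 2 * i < j \<longrightarrow> j < m \<longrightarrow> odd j \<longrightarrow> {d j, d (Suc j)} \<in> N')"
  proof (induction i)
    case 0
    have "{d j, d (Suc j)} \<in> N" if "j < m" "odd j" for j using edges[of j] that by simp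
    then show ?case using assms(1) by auto
  next
    case (Suc i)
    then obtain N' where N': "flipped N' (d (2 * i))"
      and later: "\<And>j. 2 * i < j \<Longrightarrow> j < m \<Longrightarrow> odd j \<Longrightarrow> {d j, d (Suc j)} \<in> N'"
      by auto
    let ?N = "insert {d (2 * i), d (Suc (2 * i))} (N' - {{d (Suc (2 * i)), d (2 * Suc i)}})"
    have "{d (2 * i), d (Suc (2 * i))} \<in> E" using edges[of "2 * i"] Suc.prems by simp
    moreover have "{d (Suc (2 * i)), d (2 * Suc i)} \<in> N'" using later[of "Suc (2 * i)"] Suc.prems by simp
    ultimately have "flipped ?N (d (2 * Suc i))" using flipped.flip[OF N'] by blast
    moreover have "{d j, d (Suc j)} \<in> ?N" if "2 * Suc i < j" "j < m" "odd j" for j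
    proof -
      have "d j \<noteq> d (Suc (2 * i))" "d j \<noteq> d (2 * Suc i)"
        using inj_onD[OF assms(2), of j] that by fastforce+
      then show ?thesis using later[of j] that by (auto simp: doubleton_eq_iff)
    qed
    ultimately show ?case by blast
  qed
  then show "2 * i \<le> m \<Longrightarrow> d (2 * i) \<in> exposable" using flipped_exposable by blast
qed

lemma exposable_top: "u \<in> exposable \<Longrightarrow> u \<in> V \<and> w u = W"
  unfolding exposable_def using flipped_invariant by blast

lemma exposable_alternating_path:
  assumes A: "flipped A u" and B: "flipped B u'" and uu': "{u, u'} \<in> E"
    and path: "alternating_path B A c n" "even n" "c 0 = u" "c n = u'"
  shows "j \<le> n \<Longrightarrow> c j \<in> exposable"
proof -
  have inj: "inj_on c {..n}"
    and step: "\<And>j. j < n \<Longrightarrow> {c j, c (Suc j)} \<in> (if even j then B - A else A - B)"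
    using path(1) unfolding alternating_path_def by auto
  have "A \<subseteq> E" "B \<subseteq> E" using matching_links flipped_matching A B by blast+
  then have "{c j, c (Suc j)} \<in> (if even j then E else A)" if "j < n" for j
    using step[OF that] by (auto split: if_splits)
  then have at_even: "2 * i \<le> n \<Longrightarrow> c (2 * i) \<in> exposable" for i
    using exposable_along_walk[OF _ inj] A path(3) by simp
  \<comment> \<open>The closing link {u', u} lets the exposed vertex travel from u' along the path as well,
    now reaching the vertices at odd positions.\<close>
  define shift where "shift j = (if j = 0 then n else j - 1)" for j
  have "inj_on shift {..n}" "shift ` {..n} \<subseteq> {..n}"
    unfolding shift_def by (auto simp: inj_on_def split: if_splits)
  then have "inj_on (c \<circ> shift) {..n}" using comp_inj_on inj_on_subset[OF inj] by blast
  moreover have "{(c \<circ> shift) j, (c \<circ> shift) (Suc j)} \<in> (if even j then E else B)" if "j < n" for j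
  proof (cases "j = 0")
    case True
    then show ?thesis using uu' path(3,4) by (simp add: shift_def insert_commute)
  next
    case False
    then have "{(c \<circ> shift) j, (c \<circ> shift) (Suc j)} = {c (j - 1), c (Suc (j - 1))}"
      unfolding shift_def by simp
    then show ?thesis using step[of "j - 1"] that False \<open>A \<subseteq> E\<close> by (auto split: if_splits)
  qed
  moreover have "flipped B ((c \<circ> shift) 0)" using B path(4) unfolding shift_def by simp
  ultimately have at_odd: "2 * i \<le> n \<Longrightarrow> (c \<circ> shift) (2 * i) \<in> exposable" for i
    using exposable_along_walk by blast
  show "j \<le> n \<Longrightarrow> c j \<in> exposable"
  proof (cases "even j")
    case True
    then show "j \<le> n \<Longrightarrow> c j \<in> exposable" using at_even[of "j div 2"] by simp
  next
    case False
    assume "j \<le> n"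
    then have "2 * Suc (j div 2) = Suc j" "Suc j \<le> n" using False path(2) by presburger+
    then show "c j \<in> exposable" using at_odd[of "Suc (j div 2)"] unfolding shift_def by simp
  qed
qed

lemma exposable_independent:
  assumes "u \<in> exposable" "u' \<in> exposable"
  shows "{u, u'} \<notin> E"
proof
  assume uu': "{u, u'} \<in> E"
  obtain A B where A: "flipped A u" and B: "flipped B u'"
    using assms unfolding exposable_def by blast
  note invA = flipped_invariant[OF A] and invB = flipped_invariant[OF B]
  have mA: "matching E A" and mB: "matching E B" using flipped_matching A B by blast+
  have "u \<noteq> u'" using graph_edgeD(1)[OF graph uu'] .
  have cov: "insert u (Collect (covered A)) = insert u' (Collect (covered B))"
    using invA invB by simp
  then have "covered B u" using \<open>u \<noteq> u'\<close> by blast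
  moreover have "covered A x \<longleftrightarrow> covered B x" if "x \<noteq> u" "x \<noteq> u'" for x
    using cov that by blast
  ultimately obtain n c where path: "alternating_path B A c n" "even n" "c 0 = u" "c n = u'"
    using alternating_path_exists[OF graph mA mB _ _ _ \<open>u \<noteq> u'\<close>] invA invB by blast
  have top: "w (c j) = W" if "j \<le> n" for j
    using exposable_alternating_path[OF A B uu' path that] exposable_top by blast
  have "{c j, c (Suc j)} \<in> E" if "j < n" for j
    using path(1) matching_links[OF mA] matching_links[OF mB] that unfolding alternating_path_def
    by (auto split: if_splits)
  then have "col (c (Suc j)) \<longleftrightarrow> \<not> col (c j)" if "j < n" for j
    using top_bipartite[of "c j" "c (Suc j)"] top[of j] top[of "Suc j"] that by auto
  then have "col u' = col u" using bool_alternation_even[of n "col \<circ> c"] path by simp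
  moreover have "col u \<noteq> col u'"
    using top_bipartite[OF uu'] top[of 0] top[of n] path(3,4) by simp
  ultimately show False by simp
qed

lemma exposable_neighbour_partner:
  assumes "x \<in> exposable" "{x, y} \<in> E"
  obtains z where "z \<in> exposable - {v}" "{y, z} \<in> M0"
proof -
  obtain M where M: "flipped M x" using assms(1) unfolding exposable_def by blast
  note inv = flipped_invariant[OF M]
  have mM: "matching E M" using flipped_matching[OF M] .
  have "covered M y"
    using max_weight_matching_no_free_link[of V E w M x y] graph weight_pos assms(2) inv by blast
  then obtain a where ya: "{y, a} \<in> M" using covered_partner[OF graph mM] by blast
  then have "a \<in> exposable" using flipped_exposable[OF flipped.flip[OF M assms(2)]] by blast
  have "y \<notin> exposable" using exposable_independent[OF assms(1)] assms(2) by blast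
  then have "y \<noteq> x" "y \<noteq> v" using assms(1) flipped_exposable[OF flipped.start] by blast+
  then have "covered M0 y"
    using inv \<open>covered M y\<close> by (metis insertCI insertE mem_Collect_eq)
  then obtain z where yz: "{y, z} \<in> M0" using covered_partner[OF graph matching_M0] by blast
  have "z \<in> exposable"
  proof (rule ccontr)
    assume "z \<notin> exposable"
    then have "{y, z} \<inter> exposable = {}" using \<open>y \<notin> exposable\<close> by blast
    then have "{y, z} \<in> M" using flipped_untouched[OF M] yz by blast
    then have "z = a" using matching_partner_unique[OF mM _ ya] by blast
    then show False using \<open>a \<in> exposable\<close> \<open>z \<notin> exposable\<close> by blast
  qed
  moreover have "z \<noteq> v" using yz v_exposed unfolding covered_def by blast
  ultimately show thesis using that yz by blast
qed

lemma exposed_top_vertex_absurd: False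
proof -
  let ?U = exposable and ?N = "{y. \<exists>x\<in>exposable. {x, y} \<in> E}"
  have UV: "?U \<subseteq> V" and NV: "?N \<subseteq> V"
    using exposable_top graph_edgeD(3)[OF graph] by blast+
  then have finU: "finite ?U" and finN: "finite ?N"
    using graph_finite[OF graph] finite_subset by blast+
  have "\<exists>z. z \<in> ?U - {v} \<and> {y, z} \<in> M0" if y: "y \<in> ?N" for y
  proof -
    obtain x where "x \<in> exposable" "{x, y} \<in> E" using y by blast
    then obtain z where "z \<in> ?U - {v}" "{y, z} \<in> M0" by (rule exposable_neighbour_partner)
    then show ?thesis by blast
  qed
  then have "\<exists>f. \<forall>y\<in>?N. f y \<in> ?U - {v} \<and> {y, f y} \<in> M0" by (intro bchoice) blast
  then obtain f where f: "\<And>y. y \<in> ?N \<Longrightarrow> f y \<in> ?U - {v} \<and> {y, f y} \<in> M0" by blast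
  have "inj_on f ?N"
  proof (rule inj_onI)
    fix y y' assume "y \<in> ?N" "y' \<in> ?N" "f y = f y'"
    then have "{y, f y} \<in> M0" "{y', f y'} \<in> M0" using f by blast+
    then have "{f y, y} \<in> M0" "{f y, y'} \<in> M0" using \<open>f y = f y'\<close> by (simp_all add: insert_commute)
    then show "y = y'" using matching_partner_unique[OF matching_M0] by blast
  qed
  then have "card ?N \<le> card (?U - {v})"
    using card_inj_on_le[of f ?N "?U - {v}"] f finU by (meson finite_Diff image_subset_iff)
  moreover have "v \<in> ?U" using flipped_exposable[OF flipped.start] .
  ultimately have less: "card ?N < card ?U" using finU card_Diff1_less by fastforce
  have "card ?U * D = (\<Sum>x\<in>?U. node_queue E q x)"
    using top_load exposable_top by simp
  also have "\<dots> \<le> (\<Sum>x\<in>?N. node_queue E q x)"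
    using sum_node_queue_le_neighbours[OF graph UV] exposable_independent by blast
  also have "\<dots> \<le> card ?N * D"
    using sum_bounded_above[of ?N "node_queue E q" D] load_le NV by auto
  finally show False using less load_pos by simp
qed

end

context top_weight_matching
begin

theorem top_weight_covered:
  assumes "v \<in> V" "w v = W"
  shows "covered M0 v"
proof (rule ccontr)
  assume "\<not> covered M0 v"
  then interpret top_weight_exposed V E q w W D col M0 v
    using assms by unfold_locales
  show False by (rule exposed_top_vertex_absurd)
qed

end

section \<open>LC-NSB\<close>

lemma lcnsb_run_max_weight:
  "lcnsb_run V E Q sched \<Longrightarrow>
    max_weight_matching V (active_links E (Q k)) (lcnsb_weight V E Q sched k) (sched k)"
  unfolding lcnsb_run_def max_weight_matching_def matching_active_links_iff by blast

lemma lcnsb_run_queue_Suc: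
  "lcnsb_run V E Q sched \<Longrightarrow> Q (Suc k) l = (if l \<in> sched k then Q k l - 1 else Q k l)"
  unfolding lcnsb_run_def by blast

lemma lcnsb_run_queue_mono: "lcnsb_run V E Q sched \<Longrightarrow> Q (Suc k) l \<le> Q k l"
  using lcnsb_run_queue_Suc[of V E Q sched k l] by simp

lemma lcnsb_node_queue_Suc:
  assumes "graph V E" "lcnsb_run V E Q sched"
  shows "node_queue E (Q (Suc k)) i + (if covered (sched k) i then 1 else 0) = node_queue E (Q k) i"
proof -
  have M: "matching E (sched k)" and pos: "\<And>l. l \<in> sched k \<Longrightarrow> 0 < Q k l"
    using assms(2) unfolding lcnsb_run_def by blast+
  have "Q k l = Q (Suc k) l + (if l \<in> sched k then 1 else 0)" for l
    using lcnsb_run_queue_Suc[OF assms(2)] pos[of l] by simp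
  then have "node_queue E (Q k) i = node_queue E (Q (Suc k)) i + card (links_at E i \<inter> sched k)"
    unfolding node_queue_def using graph_finite_links[OF assms(1)]
    by (simp add: sum.distrib sum.If_cases links_at_def)
  then show ?thesis using card_links_at_Int_matching[OF M] by simp
qed

lemma lcnsb_node_queue_mono:
  assumes "graph V E" "lcnsb_run V E Q sched"
  shows "node_queue E (Q (Suc k)) i \<le> node_queue E (Q k) i"
  using lcnsb_node_queue_Suc[OF assms, of k i] by linarith

lemma lcnsb_max_queue_mono:
  assumes "graph V E" "lcnsb_run V E Q sched"
  shows "max_queue V E (Q (Suc k)) \<le> max_queue V E (Q k)"
proof (rule max_queue_le[OF graph_finite[OF assms(1)]])
  fix i assume "i \<in> V"
  then show "node_queue E (Q (Suc k)) i \<le> max_queue V E (Q k)"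
    using node_queue_le_max_queue[OF graph_finite[OF assms(1)] \<open>i \<in> V\<close>, of E "Q k"]
      lcnsb_node_queue_mono[OF assms, of k i] by linarith
qed

lemma Rind_nat: "Rind sched (int k) i = (if covered (sched k) i then 1 else 0)"
  unfolding Rind_def by simp

lemma Uind_cases: "Uind sched k i = 0 \<or> Uind sched k i = 1"
  unfolding Uind_def Rind_def by auto

lemma Uind_eq_0_Suc:
  "Suc p mod 3 \<noteq> 2 \<Longrightarrow> Uind sched (Suc p) i = 0 \<longleftrightarrow> \<not> covered (sched p) i"
  unfolding Uind_def using Rind_nat[of sched p i] by simp

lemma Uind_eq_0_Suc_Suc:
  "Suc (Suc p) mod 3 = 2 \<Longrightarrow>
    Uind sched (Suc (Suc p)) i = 0 \<longleftrightarrow> \<not> (covered (sched (Suc p)) i \<and> covered (sched p) i)"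
  unfolding Uind_def using Rind_nat[of sched p i] Rind_nat[of sched "Suc p" i]
  by (simp add: algebra_simps)

lemma lcnsb_weight_bounds: "1 \<le> lcnsb_weight V E Q sched k i" "lcnsb_weight V E Q sched k i \<le> 5"
  unfolding lcnsb_weight_def Let_def using Uind_cases[of sched k i] by auto

lemma lcnsb_weight_eq_5:
  "lcnsb_weight V E Q sched k i = 5 \<longleftrightarrow>
    node_queue E (Q k) i = max_queue V E (Q k) \<and> Uind sched k i = 0"
  unfolding lcnsb_weight_def Let_def using Uind_cases[of sched k i] by auto

lemma lcnsb_no_idle_active_link:
  assumes "graph V E" "lcnsb_run V E Q sched" "{x, y} \<in> E" "0 < Q k {x, y}"
    and "\<not> covered (sched k) x" "\<not> covered (sched k) y"
  shows False
proof (rule max_weight_matching_no_free_link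
    [of V "active_links E (Q k)" "lcnsb_weight V E Q sched k" "sched k" x y])
  show "graph V (active_links E (Q k))" using graph_active_links[OF assms(1)] .
  show "{x, y} \<in> active_links E (Q k)" using assms(3,4) unfolding active_links_def by blast
  show "0 < lcnsb_weight V E Q sched k i" for i using lcnsb_weight_bounds(1)[of V E Q sched k i] by simp
qed (use lcnsb_run_max_weight[OF assms(2)] assms(5,6) in blast)+

lemma lcnsb_serves_top:
  fixes col :: "'v \<Rightarrow> bool"
  assumes "graph V E" "lcnsb_run V E Q sched" "0 < max_queue V E (Q k)"
    and bipartite: "\<And>x y. {x, y} \<in> E \<Longrightarrow> 0 < Q k {x, y} \<Longrightarrow>
      lcnsb_weight V E Q sched k x = 5 \<Longrightarrow> lcnsb_weight V E Q sched k y = 5 \<Longrightarrow> col x \<noteq> col y"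
    and "i \<in> V" "lcnsb_weight V E Q sched k i = 5"
  shows "covered (sched k) i"
proof -
  have load: "node_queue (active_links E (Q k)) (Q k) = node_queue E (Q k)"
    using node_queue_active_links graph_finite_links[OF assms(1)] by blast
  interpret top_weight_matching V "active_links E (Q k)" "Q k" "lcnsb_weight V E Q sched k" 5
    "max_queue V E (Q k)" col "sched k"
  proof unfold_locales
    show "graph V (active_links E (Q k))" using graph_active_links[OF assms(1)] .
    show "max_weight_matching V (active_links E (Q k)) (lcnsb_weight V E Q sched k) (sched k)"
      using lcnsb_run_max_weight[OF assms(2)] .
    show "0 < max_queue V E (Q k)" by (fact assms(3))
    fix i assume "i \<in> V"
    show "0 < lcnsb_weight V E Q sched k i" "lcnsb_weight V E Q sched k i \<le> 5"
      using lcnsb_weight_bounds[of V E Q sched k i] by simp_all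
    show "node_queue (active_links E (Q k)) (Q k) i \<le> max_queue V E (Q k)"
      using load node_queue_le_max_queue[OF graph_finite[OF assms(1)] \<open>i \<in> V\<close>] by simp
    show "lcnsb_weight V E Q sched k i = 5 \<Longrightarrow> node_queue (active_links E (Q k)) (Q k) i = max_queue V E (Q k)"
      using load lcnsb_weight_eq_5[of V E Q sched k i] by simp
  next
    fix x y assume "{x, y} \<in> active_links E (Q k)"
      "lcnsb_weight V E Q sched k x = 5" "lcnsb_weight V E Q sched k y = 5"
    then show "col x \<noteq> col y" using bipartite unfolding active_links_def by blast
  qed
  show ?thesis using top_weight_covered assms(5,6) by blast
qed

lemma lcnsb_node_queue_second_slot:
  assumes graph: "graph V E" and run: "lcnsb_run V E Q sched" and "p mod 3 = 0" "i \<in> V"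
  shows "node_queue E (Q (Suc (Suc p))) i \<le> max_queue V E (Q p) - 1"
proof (rule ccontr)
  let ?\<Delta> = "max_queue V E (Q p)"
  assume "\<not> ?thesis"
  moreover have "node_queue E (Q p) i \<le> ?\<Delta>"
    using node_queue_le_max_queue[OF graph_finite[OF graph] \<open>i \<in> V\<close>] .
  moreover note lcnsb_node_queue_Suc[OF graph run, of p i] lcnsb_node_queue_Suc[OF graph run, of "Suc p" i]
  ultimately have "\<not> covered (sched p) i" "\<not> covered (sched (Suc p)) i"
    and top: "node_queue E (Q (Suc p)) i = ?\<Delta>" "0 < ?\<Delta>"
    by (auto split: if_splits)
  have "max_queue V E (Q (Suc p)) = ?\<Delta>"
    using lcnsb_max_queue_mono[OF graph run, of p] top(1)
      node_queue_le_max_queue[OF graph_finite[OF graph] \<open>i \<in> V\<close>, of E "Q (Suc p)"] by linarith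
  moreover have "Suc p mod 3 \<noteq> 2" using \<open>p mod 3 = 0\<close> by presburger
  ultimately have "lcnsb_weight V E Q sched (Suc p) i = 5"
    using top(1) \<open>\<not> covered (sched p) i\<close> by (simp add: lcnsb_weight_eq_5 Uind_eq_0_Suc)
  \<comment> \<open>The critical vertices of slot p + 1 were all idle in slot p, so by maximality of
    the schedule of slot p no active link joins two of them.\<close>
  have "covered (sched (Suc p)) i"
  proof (rule lcnsb_serves_top[OF graph run _ _ \<open>i \<in> V\<close>, where col = "\<lambda>_. True"])
    show "0 < max_queue V E (Q (Suc p))" using \<open>max_queue V E (Q (Suc p)) = ?\<Delta>\<close> top(2) by simp
    fix x y assume "{x, y} \<in> E" "0 < Q (Suc p) {x, y}"
      "lcnsb_weight V E Q sched (Suc p) x = 5" "lcnsb_weight V E Q sched (Suc p) y = 5"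
    then show "True \<noteq> True"
      using lcnsb_no_idle_active_link[OF graph run, of x y p] lcnsb_run_queue_mono[OF run, of p "{x, y}"]
        \<open>Suc p mod 3 \<noteq> 2\<close> by (simp add: lcnsb_weight_eq_5 Uind_eq_0_Suc)
  qed fact
  then show False using \<open>\<not> covered (sched (Suc p)) i\<close> by contradiction
qed

lemma lcnsb_node_queue_frame:
  assumes graph: "graph V E" and run: "lcnsb_run V E Q sched" and "p mod 3 = 0" "i \<in> V"
  shows "node_queue E (Q (Suc (Suc (Suc p)))) i \<le> max_queue V E (Q p) - 2"
proof (rule ccontr)
  let ?\<Delta> = "max_queue V E (Q p)"
  assume "\<not> ?thesis"
  moreover have "node_queue E (Q p) i \<le> ?\<Delta>"
    using node_queue_le_max_queue[OF graph_finite[OF graph] \<open>i \<in> V\<close>] .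
  moreover have "node_queue E (Q (Suc (Suc p))) i \<le> ?\<Delta> - 1"
    using lcnsb_node_queue_second_slot[OF assms] .
  moreover note lcnsb_node_queue_Suc[OF graph run, of p i] lcnsb_node_queue_Suc[OF graph run, of "Suc p" i]
    lcnsb_node_queue_Suc[OF graph run, of "Suc (Suc p)" i]
  ultimately have "\<not> covered (sched (Suc (Suc p))) i"
    and "\<not> (covered (sched (Suc p)) i \<and> covered (sched p) i)"
    and top: "node_queue E (Q (Suc (Suc p))) i = ?\<Delta> - 1" "2 \<le> ?\<Delta>"
    by (auto split: if_splits)
  have "max_queue V E (Q (Suc (Suc p))) \<le> ?\<Delta> - 1"
    using lcnsb_node_queue_second_slot[OF graph run \<open>p mod 3 = 0\<close>]
    by (intro max_queue_le[OF graph_finite[OF graph]])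
  then have max: "max_queue V E (Q (Suc (Suc p))) = ?\<Delta> - 1"
    using top(1) node_queue_le_max_queue[OF graph_finite[OF graph] \<open>i \<in> V\<close>, of E "Q (Suc (Suc p))"]
    by linarith
  moreover have "Suc (Suc p) mod 3 = 2" using \<open>p mod 3 = 0\<close> by presburger
  ultimately have "lcnsb_weight V E Q sched (Suc (Suc p)) i = 5"
    using top(1) \<open>\<not> (covered (sched (Suc p)) i \<and> covered (sched p) i)\<close>
    by (simp add: lcnsb_weight_eq_5 Uind_eq_0_Suc_Suc)
  \<comment> \<open>Two adjacent critical vertices of slot p + 2 that agree on being served in slot p + 1
    were both idle in slot p or both idle in slot p + 1, contradicting maximality there.\<close>
  have "covered (sched (Suc (Suc p))) i"
  proof (rule lcnsb_serves_top[OF graph run _ _ \<open>i \<in> V\<close>, where col = "covered (sched (Suc p))"])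
    show "0 < max_queue V E (Q (Suc (Suc p)))" using max top(2) by simp
    fix x y assume xy: "{x, y} \<in> E" "0 < Q (Suc (Suc p)) {x, y}"
      and top_x: "lcnsb_weight V E Q sched (Suc (Suc p)) x = 5"
      and top_y: "lcnsb_weight V E Q sched (Suc (Suc p)) y = 5"
    have "0 < Q (Suc p) {x, y}" "0 < Q p {x, y}"
      using xy(2) lcnsb_run_queue_mono[OF run, of "Suc p" "{x, y}"] lcnsb_run_queue_mono[OF run, of p "{x, y}"]
      by linarith+
    moreover have "\<not> (covered (sched (Suc p)) x \<and> covered (sched p) x)"
      "\<not> (covered (sched (Suc p)) y \<and> covered (sched p) y)"
      using top_x top_y \<open>Suc (Suc p) mod 3 = 2\<close> by (simp_all add: lcnsb_weight_eq_5 Uind_eq_0_Suc_Suc)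
    ultimately show "covered (sched (Suc p)) x \<noteq> covered (sched (Suc p)) y"
      using lcnsb_no_idle_active_link[OF graph run xy(1)] by blast
  qed fact
  then show False using \<open>\<not> covered (sched (Suc (Suc p))) i\<close> by contradiction
qed

theorem proposition2:
  fixes V :: "'v set" and E :: "'v set set"
    and Q :: "nat \<Rightarrow> 'v set \<Rightarrow> nat" and sched :: "nat \<Rightarrow> 'v set set" and k' :: nat
  assumes "graph V E"
    and "lcnsb_run V E Q sched"
    and "max_queue V E (Q (3 * k')) \<ge> 2"
  shows "max_queue V E (Q (3 * k' + 3)) \<le> max_queue V E (Q (3 * k')) - 2"
proof (rule max_queue_le[OF graph_finite[OF assms(1)]])
  fix i assume "i \<in> V"
  have "3 * k' + 3 = Suc (Suc (Suc (3 * k')))" by simp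
  then show "node_queue E (Q (3 * k' + 3)) i \<le> max_queue V E (Q (3 * k')) - 2"
    using lcnsb_node_queue_frame[OF assms(1,2) _ \<open>i \<in> V\<close>, of "3 * k'"] by (simp only:) simp
qed

end
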